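(* Let $A,B\in\mathbb{R}^{m_1\times m_2}$ and $a>0$. Then $$\mathrm{TL1}_a\big(A+P_A^\perp(B)\big)=\mathrm{TL1}_a(A)+\mathrm{TL1}_a\big(P_A^\perp(B)\big).$$
   Context: For $a>0$ and a matrix $X\in\mathbb{R}^{m_1\times m_2}$ with singular values $\sigma_1(X)\ge\dots\ge\sigma_m(X)$, $m=\min\{m_1,m_2\}$, define $\mathrm{TL1}_a(X)=\sum_{j=1}^m\frac{(a+1)\sigma_j(X)}{a+\sigma_j(X)}$. For $A$ with SVD $A=U_AD_AV_A^\top$ (compact, over the nonzero singular values), let $S_U(A)$, $S_V(A)$ be the linear subspaces spanned by the columns of $U_A$, $V_A$, and $S_U^\perp(A)$, $S_V^\perp(A)$ their orthogonal complements. With $\mathbf{P}_S$ the orthogonal projection onto a subspace $S$, define $P_A^\perp(B)=\mathbf{P}_{S_U^\perp(A)}\,B\,\mathbf{P}_{S_V^\perp(A)}$. *)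

theory Defs
  imports "HOL-Analysis.Analysis" "HOL-Computational_Algebra.Polynomial"
begin

text \<open>Matrices in R^(m1 x m2) are rendered as real^'n^'m with m1 = CARD('m), m2 = CARD('n).\<close>

definition charpoly :: "real^'n^'n \<Rightarrow> real poly" where
  "charpoly M = det (\<chi> i j. (if i = j then [:0, 1:] else 0) - [:M$i$j:])"

definition singular_values :: "real^'n^'m \<Rightarrow> real list" where
  "singular_values X =
     rev (sorted_list_of_multiset (image_mset sqrt (proots (charpoly (transpose X ** X)))))"

definition TL1 :: "real \<Rightarrow> real^'n^'m \<Rightarrow> real" where
  "TL1 a X = (\<Sum>j < min CARD('m) CARD('n).
      (a + 1) * (singular_values X ! j) / (a + singular_values X ! j))"

definition orth_compl :: "('a::real_inner) set \<Rightarrow> 'a set" where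
  "orth_compl S = {x. \<forall>y\<in>S. orthogonal x y}"

definition orth_proj :: "('a::real_inner) set \<Rightarrow> 'a \<Rightarrow> 'a" where
  "orth_proj S x = (THE y. y \<in> S \<and> (\<forall>z\<in>S. orthogonal (x - y) z))"

definition proj_mat :: "(real^'n) set \<Rightarrow> real^'n^'n" where
  "proj_mat S = matrix (orth_proj S)"

text \<open>S_U(A): column space of A (= span of columns of U_A); S_V(A): row space (= span of columns of V_A).\<close>
definition S_U :: "real^'n^'m \<Rightarrow> (real^'m) set" where
  "S_U A = span (columns A)"

definition S_V :: "real^'n^'m \<Rightarrow> (real^'n) set" where
  "S_V A = span (rows A)"

definition P_perp :: "real^'n^'m \<Rightarrow> real^'n^'m \<Rightarrow> real^'n^'m" where
  "P_perp A B = proj_mat (orth_compl (S_U A)) ** B ** proj_mat (orth_compl (S_V A))"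

end

(*
  Write P for P_A^perp(B).  As P = P_U B P_V with P_U, P_V the (symmetric) projections onto the
  orthogonal complements of the column and row spaces of A, we have A^T P = 0 and A P^T = 0.
  Hence the Gram matrix of A + P is M + N with M = A^T A, N = P^T P, and M N = 0.  For such M and N,
  (xI - M)(xI - N) = x (xI - (M + N)), so the eigenvalues of M + N, counted with multiplicity, are
  those of M together with those of N, less n zeros.  Now TL1_a X is the sum of g(sqrt r) over the
  eigenvalues r of X^T X, where g s = (a + 1) s / (a + s) and g 0 = 0, so it is additive on such
  pairs.  Reading TL1 off the characteristic roots in this way
  uses that the characteristic polynomial of X^T X splits over the reals, that its roots are
  nonnegative, and that 0 is a root of multiplicity at least n - m.
*)

theory Submission
  imports Defs "HOL-Computational_Algebra.Fundamental_Theorem_Algebra"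
begin

section \<open>Characteristic polynomials\<close>

lemma hom_of_int:
  fixes h :: "'a::comm_ring_1 \<Rightarrow> 'b::comm_ring_1"
  assumes add: "\<And>x y. h (x + y) = h x + h y" and one: "h 1 = 1"
  shows "h (of_int k) = of_int k"
proof -
  have zero: "h 0 = 0" using add[of 0 0] by simp
  have uminus: "h (- x) = - h x" for x
  proof -
    have "h x + h (- x) = 0" using add[of x "- x"] zero by simp
    then show ?thesis by (simp add: add_eq_0_iff2)
  qed
  have "h (of_nat n) = of_nat n" for n by (induction n) (simp_all add: zero one add)
  then show ?thesis by (cases k rule: int_cases2) (simp_all add: uminus)
qed

lemma det_hom:
  fixes h :: "'a::comm_ring_1 \<Rightarrow> 'b::comm_ring_1" and A :: "'a^'n^'n"
  assumes add: "\<And>x y. h (x + y) = h x + h y" and mult: "\<And>x y. h (x * y) = h x * h y"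
    and one: "h 1 = 1"
  shows "h (det A) = det (\<chi> i j. h (A$i$j))"
proof -
  have zero: "h 0 = 0" using add[of 0 0] by simp
  have sum: "h (sum f S) = (\<Sum>x\<in>S. h (f x))" for f :: "('n \<Rightarrow> 'n) \<Rightarrow> 'a" and S
    using sum_comp_morphism[of h f S, OF zero add] by (simp add: o_def)
  have prod: "h (prod f S) = (\<Prod>x\<in>S. h (f x))" for f :: "'n \<Rightarrow> 'a" and S
    by (induction S rule: infinite_finite_induct) (simp_all add: one mult)
  show ?thesis
    unfolding det_def sum prod mult hom_of_int[of h, OF add one] by simp
qed

lemma map_poly_of_real_add:
  "map_poly of_real (p + q) = (map_poly of_real p + map_poly of_real q :: 'a::real_algebra_1 poly)"
  by (rule poly_eqI) (simp add: coeff_map_poly)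

lemma map_poly_of_real_diff:
  "map_poly of_real (p - q) = (map_poly of_real p - map_poly of_real q :: 'a::real_algebra_1 poly)"
  by (rule poly_eqI) (simp add: coeff_map_poly)

lemma map_poly_of_real_mult:
  "map_poly of_real (p * q) = (map_poly of_real p * map_poly of_real q :: 'a::{real_algebra_1,comm_ring_1} poly)"
  by (rule poly_eqI) (simp add: coeff_map_poly coeff_mult)

lemma poly_map_poly_of_real:
  "poly (map_poly of_real p) (of_real x) = (of_real (poly p x) :: 'a::{real_algebra_1,comm_ring_1})"
  by (induction p) (auto simp: map_poly_pCons)

lemma poly_map_poly_charpoly:
  fixes M :: "real^'n^'n" and z :: "'a::{real_algebra_1,comm_ring_1}"
  shows "poly (map_poly of_real (charpoly M)) z = det (\<chi> i j. (if i = j then z else 0) - of_real (M$i$j))"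
proof -
  let ?h = "\<lambda>p. poly (map_poly of_real p) z"
  have "?h (charpoly M) = det (\<chi> i j. ?h ((\<chi> i j. (if i = j then [:0, 1:] else 0) - [:M$i$j:])$i$j))"
    unfolding charpoly_def
    by (rule det_hom) (simp_all add: map_poly_of_real_add map_poly_of_real_mult)
  also have "\<dots> = det (\<chi> i j. (if i = j then z else 0) - of_real (M$i$j))"
    by (rule arg_cong[where f = det])
      (simp add: vec_eq_iff map_poly_pCons map_poly_of_real_diff)
  finally show ?thesis .
qed

lemma poly_charpoly:
  fixes M :: "real^'n^'n"
  shows "poly (charpoly M) x = det (mat x - M)"
  using poly_map_poly_charpoly[of M x] by (simp add: mat_def minus_vec_def)

lemma degree_lead_coeff_charpoly:
  fixes M :: "real^'n^'n"
  shows "degree (charpoly M) = CARD('n) \<and> lead_coeff (charpoly M) = 1"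
proof -
  define E :: "real poly^'n^'n" where "E = (\<chi> i j. (if i = j then [:0, 1:] else 0) - [:M$i$j:])"
  define T where "T = (\<lambda>p. of_int (sign p) * (\<Prod>i\<in>UNIV. E$i$p i))"
  define P where "P = {p. p permutes (UNIV :: 'n set)}"
  have fP: "finite P" unfolding P_def by (simp add: finite_permutations)
  have idP: "id \<in> P" unfolding P_def by simp
  have cp: "charpoly M = T id + sum T (P - {id})"
    unfolding charpoly_def det_def E_def[symmetric] T_def[symmetric] P_def[symmetric]
    using sum.remove[OF fP idP] by simp
  have Tid: "T id = (\<Prod>i\<in>UNIV. [:- M$i$i, 1:])"
    unfolding T_def E_def by simp
  have deg_id: "degree (T id) = CARD('n)"
    unfolding Tid by (simp add: degree_prod_sum_eq)
  have lead_id: "lead_coeff (T id) = 1"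
    unfolding Tid by (simp only: lead_coeff_prod) simp
  have degE: "degree (E$i$j) \<le> (if i = j then 1 else 0)" for i j
    unfolding E_def by (auto simp: degree_diff_le)
  have deg_other: "degree (T p) < CARD('n)" if "p \<in> P - {id}" for p
  proof -
    from that obtain k where k: "p k \<noteq> k" by (metis DiffE eq_id_iff singletonI)
    have "degree (T p) \<le> degree (\<Prod>i\<in>UNIV. E$i$p i)"
      unfolding T_def by (cases "sign p = (1::int)") (auto simp: sign_def)
    also have "\<dots> \<le> (\<Sum>i\<in>UNIV. degree (E$i$p i))"
      using degree_prod_sum_le[of UNIV "\<lambda>i. E$i$p i"] by (simp add: o_def)
    also have "\<dots> \<le> (\<Sum>i\<in>UNIV. if i = k then 0 else 1)"
    proof (rule sum_mono)
      fix i
      show "degree (E$i$p i) \<le> (if i = k then 0 else 1)"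
        using degE[of i "p i"] k by (cases "i = k") (auto split: if_splits)
    qed
    also have "\<dots> < CARD('n)"
      by (simp add: sum.If_cases Compl_eq_Diff_UNIV card_Diff_singleton)
    finally show ?thesis .
  qed
  have "degree (sum T (P - {id})) < degree (T id)"
    unfolding deg_id by (rule degree_sum_less) (simp_all add: deg_other)
  then show ?thesis
    unfolding cp using deg_id lead_id by (simp add: degree_add_eq_left lead_coeff_add_le coeff_eq_0)
qed

lemma charpoly_nonzero: "charpoly M \<noteq> 0"
  using degree_lead_coeff_charpoly[of M] by auto

lemma matrix_vector_mult_mat: "mat c *v x = c *s x"
  by (simp add: vec_eq_iff matrix_vector_mult_def mat_def if_distrib if_distribR cong: if_cong)

lemma eigenvector_if_det_mat_minus_eq_0:
  fixes M :: "'a::field^'n^'n"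
  assumes "det (mat c - M) = 0"
  obtains v where "v \<noteq> 0" "M *v v = c *s v"
proof -
  have "\<not> inj ((*v) (mat c - M))"
    using det_nz_iff_inj_gen[of "(*v) (mat c - M)"] assms by simp
  then obtain x y where "x \<noteq> y" "(mat c - M) *v x = (mat c - M) *v y"
    unfolding inj_def by blast
  then have "x - y \<noteq> 0" "(mat c - M) *v (x - y) = 0"
    by (simp_all add: matrix_vector_mult_diff_distrib)
  then show ?thesis
    using that[of "x - y"] by (simp add: matrix_vector_mult_diff_rdistrib matrix_vector_mult_mat)
qed

section \<open>Real-rootedness for symmetric matrices\<close>

lemma complex_roots_charpoly_symmetric_real:
  fixes M :: "real^'n^'n"
  assumes sym: "transpose M = M"
    and root: "poly (map_poly complex_of_real (charpoly M)) z = 0"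
  shows "Im z = 0"
proof -
  define MC :: "complex^'n^'n" where "MC = (\<chi> i j. of_real (M$i$j))"
  have "det (mat z - MC) = 0"
    using root by (simp add: poly_map_poly_charpoly MC_def mat_def minus_vec_def)
  then obtain v where "v \<noteq> 0" and eigen: "MC *v v = z *s v"
    by (rule eigenvector_if_det_mat_minus_eq_0)
  txt \<open>The Hermitian form q = v* M v is real because M is symmetric, and equals z |v|^2.\<close>
  define q where "q = (\<Sum>i\<in>UNIV. \<Sum>j\<in>UNIV. cnj (v$i) * of_real (M$i$j) * v$j)"
  define r where "r = (\<Sum>i\<in>UNIV. (Re (v$i))\<^sup>2 + (Im (v$i))\<^sup>2)"
  have "q = (\<Sum>i\<in>UNIV. cnj (v$i) * (MC *v v)$i)"
    by (simp add: q_def MC_def matrix_vector_mult_def sum_distrib_left mult.assoc)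
  also have "\<dots> = (\<Sum>i\<in>UNIV. z * (v$i * cnj (v$i)))"
    by (simp add: eigen mult_ac)
  also have "\<dots> = z * of_real r"
    by (simp add: r_def sum_distrib_left complex_mult_cnj)
  finally have q: "q = z * of_real r" .
  have "cnj q = (\<Sum>i\<in>UNIV. \<Sum>j\<in>UNIV. v$i * of_real (M$i$j) * cnj (v$j))"
    by (simp add: q_def)
  also have "\<dots> = (\<Sum>j\<in>UNIV. \<Sum>i\<in>UNIV. v$i * of_real (M$i$j) * cnj (v$j))"
    by (rule sum.swap)
  also have "\<dots> = q"
    using sym by (simp add: q_def transpose_def vec_eq_iff mult_ac)
  finally have "Im q = 0"
    by (simp add: complex_eq_iff)
  moreover have "r > 0"
  proof -
    obtain k where "v$k \<noteq> 0" using \<open>v \<noteq> 0\<close> by (metis vec_eq_iff zero_index)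
    then have "(Re (v$k))\<^sup>2 + (Im (v$k))\<^sup>2 > 0"
      by (simp add: complex_eq_iff sum_power2_gt_zero_iff)
    then show ?thesis unfolding r_def by (intro sum_pos2[of UNIV k]) auto
  qed
  ultimately show ?thesis using q by simp
qed

lemma size_proots_eq_degree_if_complex_roots_real:
  fixes p :: "real poly"
  assumes "\<And>z. poly (map_poly complex_of_real p) z = 0 \<Longrightarrow> Im z = 0"
  shows "size (proots p) = degree p"
  using assms
proof (induction "degree p" arbitrary: p)
  case 0
  then obtain c where "p = [:c:]" by (metis degree_eq_zeroE)
  then show ?case by (cases "c = 0") (auto intro!: multiset_eqI)
next
  case (Suc n)
  let ?pC = "map_poly complex_of_real p"
  have "degree ?pC \<noteq> 0" using Suc.hyps(2) by (simp add: degree_map_poly)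
  then obtain z where z: "poly ?pC z = 0"
    by (metis fundamental_theorem_of_algebra constant_degree)
  define r where "r = Re z"
  have "z = of_real r" using Suc.prems[OF z] by (simp add: r_def complex_eq_iff)
  then have "poly p r = 0" using z poly_map_poly_of_real[of p r, where 'a = complex] by simp
  then obtain q where p: "p = [:-r, 1:] * q"
    by (metis dvdE poly_eq_0_iff_dvd)
  have "q \<noteq> 0" using p Suc.hyps(2) by auto
  have deg_q: "degree q = n"
    using Suc.hyps(2) \<open>q \<noteq> 0\<close> unfolding p by (subst (asm) degree_mult_eq) auto
  have "Im w = 0" if "poly (map_poly complex_of_real q) w = 0" for w
    using Suc.prems[of w] that unfolding p map_poly_of_real_mult by simp
  then have "size (proots q) = n" using Suc.hyps(1)[of q] deg_q by simp
  moreover have "proots p = proots [:-r, 1:] + proots q"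
    unfolding p using \<open>q \<noteq> 0\<close> by (intro proots_mult) auto
  ultimately show ?case using Suc.hyps(2) by simp
qed

lemma size_proots_charpoly_symmetric:
  fixes M :: "real^'n^'n"
  assumes "transpose M = M"
  shows "size (proots (charpoly M)) = CARD('n)"
  using size_proots_eq_degree_if_complex_roots_real[of "charpoly M"]
    complex_roots_charpoly_symmetric_real[OF assms] degree_lead_coeff_charpoly[of M]
  by auto

section \<open>Multiplicity of the eigenvalue zero\<close>

lemma power_card_dvd_det:
  fixes A :: "'a::comm_ring_1^'n^'n"
  assumes "\<And>r c. c \<in> J \<Longrightarrow> x dvd A$r$c"
  shows "x ^ card J dvd det A"
  unfolding det_def
proof (rule dvd_sum)
  fix p assume "p \<in> {p. p permutes (UNIV :: 'n set)}"
  then have "bij p" by (simp add: permutes_bij)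
  define I where "I = {i. p i \<in> J}"
  have "card I = card J"
  proof -
    have "p ` I = J" "inj_on p I"
      unfolding I_def using \<open>bij p\<close> by (auto simp: bij_def surj_def inj_def inj_on_def)
    then show ?thesis by (metis card_image)
  qed
  have "x ^ card I dvd (\<Prod>i\<in>I. A$i$p i)"
    using prod_dvd_prod[of I "\<lambda>_. x" "\<lambda>i. A$i$p i"] assms by (simp add: I_def)
  also have "\<dots> dvd (\<Prod>i\<in>UNIV. A$i$p i)"
    by (rule prod_dvd_prod_subset) auto
  finally show "x ^ card J dvd of_int (sign p) * (\<Prod>i\<in>UNIV. A$i$p i)"
    using \<open>card I = card J\<close> by simp
qed

lemma invertible_matrix_extending_independent:
  fixes B :: "(real^'n) set"
  assumes "independent B"
  obtains Q :: "real^'n^'n" and J :: "'n set"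
  where "det Q \<noteq> 0" "card J = card B" "\<And>c. c \<in> J \<Longrightarrow> column c Q \<in> B"
proof -
  define E where "E = extend_basis B"
  have "B \<subseteq> E" "independent E" "span E = UNIV"
    using assms by (simp_all add: E_def extend_basis_superset independent_extend_basis)
  then have "card E = CARD('n)"
    by (metis dim_UNIV dim_eq_card_independent dim_span DIM_cart DIM_real mult_1_right)
  moreover have "finite E" using \<open>independent E\<close> by (rule finiteI_independent)
  ultimately obtain g where g: "bij_betw g (UNIV :: 'n set) E"
    using finite_same_card_bij[of "UNIV :: 'n set" E] by auto
  define Q :: "real^'n^'n" where "Q = (\<chi> r c. g c $ r)"
  define J where "J = {c. g c \<in> B}"
  have column_Q: "column c Q = g c" for c by (simp add: column_def Q_def vec_eq_iff)
  have "columns Q = E" using g by (auto simp: columns_def column_Q bij_betw_def)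
  then have "rank Q = CARD('n)"
    using \<open>independent E\<close> \<open>card E = CARD('n)\<close> by (simp add: column_rank_def dim_eq_card_independent)
  then have "det Q \<noteq> 0" by (simp add: det_eq_0_rank)
  moreover have "card J = card B"
  proof -
    have "g ` J = B" "inj_on g J"
      using g \<open>B \<subseteq> E\<close> by (auto simp: J_def bij_betw_def inj_on_def)
    then show ?thesis by (metis card_image)
  qed
  moreover have "column c Q \<in> B" if "c \<in> J" for c using that by (simp add: column_Q J_def)
  ultimately show ?thesis using that by blast
qed

lemma power_card_kernel_dvd_charpoly:
  fixes M :: "real^'n^'n"
  assumes "independent B" and kernel: "\<And>v. v \<in> B \<Longrightarrow> M *v v = 0"
  shows "[:0, 1:] ^ card B dvd charpoly M"
proof -
  obtain Q J where "det Q \<noteq> 0" "card J = card B" and J: "\<And>c. c \<in> J \<Longrightarrow> column c Q \<in> B"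
    using invertible_matrix_extending_independent[OF assms(1)] by blast
  define x :: "real poly" where "x = [:0, 1:]"
  define X where "X = (\<chi> i j. (if i = j then x else 0) - [:M$i$j:])"
  define QP where "QP = (\<chi> i j. [:Q$i$j:])"
  have "det QP = [:det Q:]"
    unfolding QP_def using det_hom[of "\<lambda>a. [:a:]" Q] by simp
  then have "det (X ** QP) = charpoly M * [:det Q:]"
    unfolding charpoly_def X_def x_def by (simp add: det_mul)
  txt \<open>Right multiplication by Q makes every column of xI - M indexed by J divisible by x.\<close>
  moreover have "x ^ card J dvd det (X ** QP)"
  proof (rule power_card_dvd_det)
    fix r c assume "c \<in> J"
    have "(M ** Q)$r$c = (M *v column c Q)$r"
      by (simp add: matrix_matrix_mult_def matrix_vector_mult_def column_def)
    then have MQ: "(M ** Q)$r$c = 0" using kernel[OF J[OF \<open>c \<in> J\<close>]] by simp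
    have "(X ** QP)$r$c = (\<Sum>k\<in>UNIV. (if r = k then x * [:Q$k$c:] else 0) - [:M$r$k * Q$k$c:])"
      unfolding X_def QP_def matrix_matrix_mult_def vec_lambda_beta
      by (intro sum.cong) (auto simp: left_diff_distrib smult_diff_right mult.commute)
    also have "\<dots> = x * [:Q$r$c:] - [:(M ** Q)$r$c:]"
      by (simp add: sum_subtractf sum_to_poly matrix_matrix_mult_def)
    finally show "x dvd (X ** QP)$r$c" by (simp add: MQ dvd_smult)
  qed
  moreover have "is_unit [:det Q:]"
    using \<open>det Q \<noteq> 0\<close> by (simp add: is_unit_const_poly_iff dvd_field_iff)
  ultimately show ?thesis using \<open>card J = card B\<close> by (metis dvd_mult_unit_iff x_def)
qed

lemma count_zero_proots_charpoly_ge: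
  fixes M :: "real^'n^'n"
  shows "CARD('n) - rank M \<le> count (proots (charpoly M)) 0"
proof -
  txt \<open>The orthogonal complement of the row space lies in the kernel.\<close>
  define K where "K = {y \<in> UNIV. \<forall>x \<in> span (rows M). orthogonal x y}"
  have "dim K + dim (span (rows M)) = dim (UNIV :: (real^'n) set)"
    unfolding K_def by (rule dim_subspace_orthogonal_to_vectors) auto
  moreover have "dim (span (rows M)) = rank M"
    by (simp add: row_rank_def)
  moreover have "dim (UNIV :: (real^'n) set) = CARD('n)"
    by simp
  ultimately have "dim K + rank M = CARD('n)"
    by linarith
  obtain B where B: "B \<subseteq> K" "independent B" "K \<subseteq> span B" "card B = dim K"
    by (rule basis_exists)
  have "M *v v = 0" if "v \<in> K" for v
  proof -
    have "orthogonal (row i M) v" for i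
      using that by (auto simp: K_def rows_def intro: span_base)
    then show ?thesis
      by (simp add: vec_eq_iff orthogonal_def matrix_vector_mult_def inner_vec_def row_def)
  qed
  then have "[:0, 1:] ^ card B dvd charpoly M"
    using B by (intro power_card_kernel_dvd_charpoly) auto
  then have "card B \<le> order 0 (charpoly M)"
    using order_divides[of 0 "card B" "charpoly M"] by (simp add: charpoly_nonzero)
  then show ?thesis
    using B \<open>dim K + rank M = CARD('n)\<close> by (simp add: charpoly_nonzero)
qed

lemma charpoly_gram_root_nonneg:
  fixes X :: "real^'n^'m"
  assumes "poly (charpoly (transpose X ** X)) r = 0"
  shows "r \<ge> 0"
proof -
  have "det (mat r - transpose X ** X) = 0" using assms by (simp add: poly_charpoly)
  then obtain v where "v \<noteq> 0" and eigen: "(transpose X ** X) *v v = r *s v"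
    by (rule eigenvector_if_det_mat_minus_eq_0)
  have "r * (v \<bullet> v) = v \<bullet> ((transpose X ** X) *v v)"
    by (simp add: eigen inner_vec_def sum_distrib_left mult_ac)
  also have "\<dots> = (X *v v) \<bullet> (X *v v)"
    by (simp flip: matrix_vector_mul_assoc add: dot_lmul_matrix[symmetric] inner_commute)
  finally have "r * (v \<bullet> v) \<ge> 0" by simp
  moreover have "v \<bullet> v > 0" using \<open>v \<noteq> 0\<close> by simp
  ultimately show ?thesis by (simp add: zero_le_mult_iff)
qed

section \<open>Orthogonal projections\<close>

lemma orth_proj_in_subspace_orthogonal:
  fixes S :: "'a::euclidean_space set"
  assumes "subspace S"
  shows "orth_proj S x \<in> S \<and> (\<forall>z\<in>S. orthogonal (x - orth_proj S x) z)"
proof -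
  have "span S = S" using assms by simp
  then obtain y z where "y \<in> S" "\<And>w. w \<in> S \<Longrightarrow> orthogonal z w" "x = y + z"
    using orthogonal_subspace_decomp_exists[of S x] by metis
  then have y: "y \<in> S \<and> (\<forall>w\<in>S. orthogonal (x - y) w)"
    by simp
  have "y' = y" if y': "y' \<in> S \<and> (\<forall>w\<in>S. orthogonal (x - y') w)" for y'
  proof -
    have "y - y' \<in> S" using y y' assms by (simp add: subspace_diff)
    then have "(x - y') \<bullet> (y - y') = 0" "(x - y) \<bullet> (y - y') = 0"
      using y y' by (simp_all add: orthogonal_def)
    moreover have "(y - y') \<bullet> (y - y') = (x - y') \<bullet> (y - y') - (x - y) \<bullet> (y - y')"
      by (simp add: inner_diff_left)
    ultimately have "(y - y') \<bullet> (y - y') = 0"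
      by simp
    then show ?thesis by simp
  qed
  then have "orth_proj S x = y"
    unfolding orth_proj_def using y by (intro the_equality) blast+
  then show ?thesis using y by simp
qed

lemma orth_proj_self_adjoint:
  fixes S :: "'a::euclidean_space set"
  assumes "subspace S"
  shows "orth_proj S x \<bullet> y = x \<bullet> orth_proj S y"
proof -
  let ?p = "orth_proj S"
  have "?p x \<bullet> (y - ?p y) = 0" "(x - ?p x) \<bullet> ?p y = 0"
    using orth_proj_in_subspace_orthogonal[OF assms, of x] orth_proj_in_subspace_orthogonal[OF assms, of y]
    by (auto simp: orthogonal_def inner_commute)
  then show ?thesis by (simp add: inner_diff_left inner_diff_right)
qed

lemma subspace_orth_compl: "subspace (orth_compl T)"
  unfolding subspace_def orth_compl_def orthogonal_def by (simp add: inner_add_left)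

lemma orthogonal_orth_proj_orth_compl:
  fixes T :: "'a::euclidean_space set"
  assumes "u \<in> T"
  shows "u \<bullet> orth_proj (orth_compl T) w = 0"
  using orth_proj_in_subspace_orthogonal[OF subspace_orth_compl, of T w] assms
  by (auto simp: orth_compl_def orthogonal_def inner_commute)

lemma proj_mat_nth: "proj_mat S $ k $ j = orth_proj S (axis j 1) $ k"
  unfolding proj_mat_def matrix_def by simp

lemma transpose_proj_mat:
  fixes S :: "(real^'n) set"
  assumes "subspace S"
  shows "transpose (proj_mat S) = proj_mat S"
proof -
  have "orth_proj S (axis j 1) $ k = orth_proj S (axis k 1) $ j" for j k :: 'n
    using orth_proj_self_adjoint[OF assms, of "axis j 1" "axis k 1"]
    by (simp add: inner_axis inner_axis')
  then show ?thesis by (simp add: vec_eq_iff transpose_def proj_mat_nth)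
qed

lemma transpose_mult_proj_mat_orth_compl_columns:
  fixes A :: "real^'n^'m"
  shows "transpose A ** proj_mat (orth_compl (span (columns A))) = 0"
proof -
  have "column i A \<bullet> orth_proj (orth_compl (span (columns A))) (axis j 1) = 0" for i j
    by (rule orthogonal_orth_proj_orth_compl) (auto simp: columns_def intro: span_base)
  then show ?thesis
    by (simp add: vec_eq_iff matrix_matrix_mult_def transpose_def proj_mat_nth inner_vec_def column_def)
qed

lemma mult_proj_mat_orth_compl_rows:
  fixes A :: "real^'n^'m"
  shows "A ** proj_mat (orth_compl (span (rows A))) = 0"
  using transpose_mult_proj_mat_orth_compl_columns[of "transpose A"] by simp

lemma transpose_mult_P_perp: "transpose A ** P_perp A B = 0"
  unfolding P_perp_def S_U_def
  by (metis transpose_mult_proj_mat_orth_compl_columns matrix_mul_assoc times0_left)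

lemma mult_transpose_P_perp: "A ** transpose (P_perp A B) = 0"
proof -
  have "transpose (P_perp A B) =
      proj_mat (orth_compl (S_V A)) ** (transpose B ** proj_mat (orth_compl (S_U A)))"
    unfolding P_perp_def
    by (simp add: matrix_transpose_mul transpose_proj_mat subspace_orth_compl matrix_mul_assoc)
  then show ?thesis
    unfolding S_V_def by (metis mult_proj_mat_orth_compl_rows matrix_mul_assoc times0_left)
qed

section \<open>Gram matrices and TL1\<close>

lemma transpose_zero: "transpose (0 :: 'a::zero^'n^'m) = 0"
  by (simp add: vec_eq_iff transpose_def)

lemma transpose_add: "transpose (A + B) = transpose A + transpose (B :: 'a::monoid_add^'n^'m)"
  by (simp add: vec_eq_iff transpose_def)

lemma matrix_add_rdistrib: "(A + B) ** C = A ** C + B ** C"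
  by (simp add: vec_eq_iff matrix_matrix_mult_def sum.distrib distrib_right)

lemma gram_add_if_orthogonal:
  fixes A P :: "real^'n^'m"
  assumes "transpose A ** P = 0"
  shows "transpose (A + P) ** (A + P) = transpose A ** A + transpose P ** P"
proof -
  have "transpose P ** A = 0"
    using arg_cong[OF assms, of transpose] by (simp add: matrix_transpose_mul transpose_zero)
  then show ?thesis
    using assms by (simp add: transpose_add matrix_add_ldistrib matrix_add_rdistrib)
qed

lemma gram_mult_gram_eq_0:
  fixes A P :: "real^'n^'m"
  assumes "A ** transpose P = 0"
  shows "(transpose A ** A) ** (transpose P ** P) = 0"
  by (metis assms matrix_mul_assoc times0_left times0_right)

lemma charpoly_mult_if_mult_eq_0:
  fixes M N :: "real^'n^'n"
  assumes "M ** N = 0"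
  shows "charpoly M * charpoly N = [:0, 1:] ^ CARD('n) * charpoly (M + N)"
proof -
  define x :: "real poly" where "x = [:0, 1:]"
  define X where "X = (\<lambda>K :: real^'n^'n. \<chi> i j. (if i = j then x else 0) - [:K$i$j:])"
  have MN: "(\<Sum>k\<in>UNIV. M$i$k * N$k$j) = 0" for i j
    using arg_cong[OF assms, of "\<lambda>K. K$i$j"] by (simp add: matrix_matrix_mult_def)
  have "(X M ** X N)$i$j = (\<Sum>k\<in>UNIV. (if i = k then x * X N $k$j else 0)
      - (if k = j then [:M$i$k:] * x else 0) + [:M$i$k * N$k$j:])" for i j
    unfolding X_def matrix_matrix_mult_def vec_lambda_beta
    by (intro sum.cong) (auto simp: algebra_simps)
  also have "\<dots> i j = x * X (M + N) $i$j" for i j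
    by (simp add: sum.distrib sum_subtractf sum_to_poly MN X_def algebra_simps smult_add_left)
  finally have "X M ** X N = (\<chi> i. x *s X (M + N) $ i)"
    by (simp add: vec_eq_iff)
  then have "det (X M) * det (X N) = x ^ CARD('n) * det (X (M + N))"
    by (simp add: det_mul[symmetric] det_rows_mul)
  then show ?thesis
    unfolding charpoly_def X_def x_def .
qed

lemma proots_charpoly_add_if_mult_eq_0:
  fixes M N :: "real^'n^'n"
  assumes "M ** N = 0"
  shows "proots (charpoly M) + proots (charpoly N)
    = replicate_mset CARD('n) 0 + proots (charpoly (M + N))"
proof -
  have "proots (charpoly M) + proots (charpoly N) = proots (charpoly M * charpoly N)"
    by (simp add: proots_mult charpoly_nonzero)
  also have "\<dots> = proots ([:0, 1:] ^ CARD('n)) + proots (charpoly (M + N))"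
    unfolding charpoly_mult_if_mult_eq_0[OF assms] by (simp add: proots_mult charpoly_nonzero)
  also have "proots ([:0, 1:] ^ CARD('n)) = replicate_mset CARD('n) (0::real)"
    using proots_linear_factor[of "0::real"] by (simp add: proots_power)
  finally show ?thesis .
qed

lemma count_le_count_image_mset: "count A x \<le> count (image_mset f A) (f x)"
  by (induction A) auto

lemma sum_prefix_rev_sorted_list_of_multiset:
  fixes S :: "real multiset" and F :: "real \<Rightarrow> 'a::comm_monoid_add"
  assumes nonneg: "\<And>s. s \<in># S \<Longrightarrow> s \<ge> 0" and "k \<le> size S"
    and zeros: "size S - k \<le> count S 0" and "F 0 = 0"
  shows "(\<Sum>j<k. F (rev (sorted_list_of_multiset S) ! j)) = (\<Sum>s\<in>#S. F s)"
proof -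
  define xs where "xs = sorted_list_of_multiset (filter_mset (\<lambda>s. s \<noteq> 0) S)"
  have "S = replicate_mset (count S 0) 0 + filter_mset (\<lambda>s. s \<noteq> 0) S"
    by (rule multiset_eqI) auto
  then have "mset (replicate (count S 0) 0 @ xs) = S"
    by (simp add: xs_def)
  moreover have "sorted (replicate (count S 0) 0 @ xs)"
    using nonneg by (auto simp: sorted_append xs_def order.order_iff_strict)
  ultimately have "sorted_list_of_multiset S = replicate (count S 0) 0 @ xs"
    by (metis sorted_list_of_multiset_mset sorted_sort_id)
  then have L_eq: "rev (sorted_list_of_multiset S) = rev xs @ replicate (count S 0) 0"
    by simp
  define L where "L = rev (sorted_list_of_multiset S)"
  have "length L = size S"
    unfolding L_def by (metis length_rev mset_sorted_list_of_multiset size_mset)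
  have "length xs \<le> k" using zeros \<open>length L = size S\<close> by (simp add: L_def L_eq)
  have "(\<Sum>j<size S. F (L ! j)) = (\<Sum>j<k. F (L ! j)) + (\<Sum>j\<in>{k..<size S}. F (L ! j))"
    using \<open>k \<le> size S\<close> by (metis atLeast0LessThan sum.atLeastLessThan_concat zero_le)
  moreover have "L ! j = 0" if "k \<le> j" "j < size S" for j
    using that \<open>length xs \<le> k\<close> \<open>length L = size S\<close> by (simp add: L_def L_eq nth_append)
  ultimately have "(\<Sum>j<k. F (L ! j)) = (\<Sum>j<size S. F (L ! j))"
    using \<open>F 0 = 0\<close> by simp
  also have "\<dots> = sum_list (map F L)"
    using \<open>length L = size S\<close> by (simp add: sum_list_sum_nth atLeast0LessThan)
  also have "\<dots> = (\<Sum>s\<in>#S. F s)"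
    by (metis L_def mset_map mset_rev mset_sorted_list_of_multiset sum_mset_sum_list)
  finally show ?thesis unfolding L_def .
qed

lemma TL1_eq_sum_proots_charpoly_gram:
  fixes X :: "real^'n^'m"
  shows "TL1 a X = (\<Sum>r\<in>#proots (charpoly (transpose X ** X)). (a + 1) * sqrt r / (a + sqrt r))"
proof -
  define R where "R = proots (charpoly (transpose X ** X))"
  have "size R = CARD('n)"
    unfolding R_def by (rule size_proots_charpoly_symmetric) (simp add: matrix_transpose_mul)
  have "rank (transpose X ** X) \<le> CARD('m)"
    using rank_mul_le_left[of "transpose X" X] rank_bound[of "transpose X"] by simp
  then have "CARD('n) - CARD('m) \<le> count R 0"
    using count_zero_proots_charpoly_ge[of "transpose X ** X"] unfolding R_def by linarith
  also have "count R 0 \<le> count (image_mset sqrt R) 0"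
    using count_le_count_image_mset[of R 0 sqrt] by simp
  finally have zeros: "CARD('n) - min CARD('m) CARD('n) \<le> count (image_mset sqrt R) 0"
    by linarith
  txt \<open>TL1 sums only the min(m, n) largest singular values; the others vanish.\<close>
  have "TL1 a X = (\<Sum>j<min CARD('m) CARD('n).
      (\<lambda>s. (a + 1) * s / (a + s)) (rev (sorted_list_of_multiset (image_mset sqrt R)) ! j))"
    unfolding TL1_def singular_values_def R_def by simp
  also have "\<dots> = (\<Sum>s\<in>#image_mset sqrt R. (a + 1) * s / (a + s))"
    using zeros \<open>size R = CARD('n)\<close>
    by (intro sum_prefix_rev_sorted_list_of_multiset) (auto simp: R_def charpoly_nonzero
        intro: charpoly_gram_root_nonneg)
  finally show ?thesis
    by (simp add: R_def multiset.map_comp o_def)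
qed

theorem lemma4:
  fixes A B :: "real^'n^'m" and a :: real
  assumes "a > 0"
  shows "TL1 a (A + P_perp A B) = TL1 a A + TL1 a (P_perp A B)"
proof -
  let ?P = "P_perp A B"
  let ?G = "\<lambda>r. (a + 1) * sqrt r / (a + sqrt r)"
  have "TL1 a A + TL1 a ?P =
      (\<Sum>r\<in>#proots (charpoly (transpose A ** A)) + proots (charpoly (transpose ?P ** ?P)). ?G r)"
    by (simp add: TL1_eq_sum_proots_charpoly_gram)
  also have "\<dots> = (\<Sum>r\<in>#proots (charpoly (transpose A ** A + transpose ?P ** ?P)). ?G r)"
    by (simp add: proots_charpoly_add_if_mult_eq_0 gram_mult_gram_eq_0 mult_transpose_P_perp)
  also have "\<dots> = TL1 a (A + ?P)"
    by (simp add: TL1_eq_sum_proots_charpoly_gram gram_add_if_orthogonal transpose_mult_P_perp)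
  finally show ?thesis by simp
qed

end
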